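(* Let $T$ be a tree and $f,g$ proper 3-colorings of $T$. Then $$\operatorname{dist}_{\mathcal{C}_3(T)}(f,g)=\min_{h\in D(f,g)}\|h\|_1 .$$
   Context: Let $T$ be a finite tree with vertex set $V$ and edge set $E$. A proper 3-coloring of $T$ is a map $f\colon V\to\mathbb{Z}/3\mathbb{Z}$ with $f(u)\neq f(v)$ for every edge $uv\in E$. The 3-coloring graph $\mathcal{C}_3(T)$ has the proper 3-colorings as vertices, two colorings adjacent iff they differ at exactly one vertex. A labeling of $T$ is a map $h\colon V\to\mathbb{Z}$ with $|h(u)-h(v)|\le 1$ for every edge $uv\in E$, and $\|h\|_1=\sum_{v\in V}|h(v)|$. Given proper 3-colorings $f,g$, $D(f,g)$ is the set of labelings $h$ with $h(v)\equiv g(v)-f(v)\pmod 3$ for all $v\in V$. *)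

theory Defs
  imports Main "HOL-Library.Numeral_Type" "HOL-Library.Extended_Nat"
begin

definition simple_graph :: "'a set \<Rightarrow> ('a \<times> 'a) set \<Rightarrow> bool" where
  "simple_graph V E \<longleftrightarrow> finite V \<and> E \<subseteq> V \<times> V \<and> sym E \<and> (\<forall>v. (v, v) \<notin> E)"

definition connected_graph :: "'a set \<Rightarrow> ('a \<times> 'a) set \<Rightarrow> bool" where
  "connected_graph V E \<longleftrightarrow> (\<forall>u\<in>V. \<forall>v\<in>V. (u, v) \<in> E\<^sup>*)"

definition is_cycle :: "('a \<times> 'a) set \<Rightarrow> 'a list \<Rightarrow> bool" where
  "is_cycle E cs \<longleftrightarrow> length cs \<ge> 3 \<and> distinct cs
     \<and> (\<forall>i. Suc i < length cs \<longrightarrow> (cs ! i, cs ! Suc i) \<in> E)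
     \<and> (last cs, hd cs) \<in> E"

definition is_tree :: "'a set \<Rightarrow> ('a \<times> 'a) set \<Rightarrow> bool" where
  "is_tree V E \<longleftrightarrow> simple_graph V E \<and> V \<noteq> {} \<and> connected_graph V E
     \<and> \<not> (\<exists>cs. is_cycle E cs)"

text \<open>Proper 3-colorings with values in Z/3Z (type 3); extended by 0 outside V so that
  colorings of T correspond bijectively to these functions.\<close>
definition proper3 :: "'a set \<Rightarrow> ('a \<times> 'a) set \<Rightarrow> ('a \<Rightarrow> 3) \<Rightarrow> bool" where
  "proper3 V E f \<longleftrightarrow> (\<forall>(u, v)\<in>E. f u \<noteq> f v) \<and> (\<forall>v. v \<notin> V \<longrightarrow> f v = 0)"

definition col_adj :: "'a set \<Rightarrow> ('a \<times> 'a) set \<Rightarrow> ('a \<Rightarrow> 3) \<Rightarrow> ('a \<Rightarrow> 3) \<Rightarrow> bool" where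
  "col_adj V E f g \<longleftrightarrow> proper3 V E f \<and> proper3 V E g \<and> card {v\<in>V. f v \<noteq> g v} = 1"

text \<open>Graph distance in the 3-coloring graph (infinite if not connected).\<close>
definition col_dist :: "'a set \<Rightarrow> ('a \<times> 'a) set \<Rightarrow> ('a \<Rightarrow> 3) \<Rightarrow> ('a \<Rightarrow> 3) \<Rightarrow> enat" where
  "col_dist V E f g = (INF n \<in> {n. (col_adj V E ^^ n) f g}. enat n)"

definition labeling :: "'a set \<Rightarrow> ('a \<times> 'a) set \<Rightarrow> ('a \<Rightarrow> int) \<Rightarrow> bool" where
  "labeling V E h \<longleftrightarrow> (\<forall>(u, v)\<in>E. \<bar>h u - h v\<bar> \<le> 1)"

definition norm1 :: "'a set \<Rightarrow> ('a \<Rightarrow> int) \<Rightarrow> nat" where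
  "norm1 V h = nat (\<Sum>v\<in>V. \<bar>h v\<bar>)"

definition Dset :: "'a set \<Rightarrow> ('a \<times> 'a) set \<Rightarrow> ('a \<Rightarrow> 3) \<Rightarrow> ('a \<Rightarrow> 3) \<Rightarrow> ('a \<Rightarrow> int) set" where
  "Dset V E f g = {h. labeling V E h \<and> (\<forall>v\<in>V. (of_int (h v) :: 3) = g v - f v)}"

end

theory Submission imports Defs begin

text \<open>
  A labeling h in D(f, g) prescribes, vertex by vertex, by how many steps of \<open>\<plusminus>1\<close> in Z/3 the
  colour of f must be turned to reach g. Recolouring a single vertex v by \<open>\<plusminus>1\<close> changes the
  prescription at v by \<open>\<mp>1\<close>; properness of the three colourings involved guarantees that the
  result is still a labeling, so a recolouring sequence of length n yields some h with
  \<open>\<parallel>h\<parallel>\<^sub>1 \<le> n\<close>. Conversely, for \<open>h \<noteq> 0\<close> let \<open>\<sigma>\<close> be the sign of a nonzero value and consider the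
  vertices maximising \<open>\<sigma> h\<close>. If each of them had a neighbour coloured \<open>f v + \<sigma>\<close>, that
  neighbour would again be a maximiser, and following such neighbours would give a
  non-backtracking walk, hence a cycle. So some maximiser v can be recoloured to \<open>f v + \<sigma>\<close>,
  which lowers \<open>\<parallel>h\<parallel>\<^sub>1\<close> by one. Finally D(f, g) is nonempty because, removing leaves one at a
  time, every Z/3-valued function on a forest lifts to a labeling.
\<close>

lemma num3_cases: "(z::3) = 0 \<or> z = 1 \<or> z = -1"
proof (cases z)
  case (of_int k)
  then have "k < 3" by simp
  with of_int have "k = 0 \<or> k = 1 \<or> k = 2" by arith
  then show ?thesis using of_int by auto
qed

lemma num3_add_add_eq_0: "(x::3) \<noteq> 0 \<Longrightarrow> x + s \<noteq> 0 \<Longrightarrow> s \<noteq> 0 \<Longrightarrow> x + s + s = 0"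
  using num3_cases[of x] num3_cases[of s] by auto

lemma num3_lift_near: "\<exists>c::int. \<bar>c - t\<bar> \<le> 1 \<and> (of_int c :: 3) = d"
proof -
  consider "d - of_int t = 0" | "d - of_int t = 1" | "d - of_int t = -1"
    using num3_cases by blast
  then show ?thesis
  proof cases
    case 1 then show ?thesis by (intro exI[of _ t]) simp
  next
    case 2 then show ?thesis by (intro exI[of _ "t + 1"]) (simp add: diff_eq_eq)
  next
    case 3 then show ?thesis by (intro exI[of _ "t - 1"]) (simp add: diff_eq_eq)
  qed
qed

lemma nonbacktracking_walk_imp_cycle:
  fixes w :: "nat \<Rightarrow> 'a"
  assumes "finite V" and "\<And>k. w k \<in> V" and edge: "\<And>k. (w k, w (Suc k)) \<in> E"
    and nonbacktracking: "\<And>k. w (Suc (Suc k)) \<noteq> w k" and irrefl: "\<And>v. (v, v) \<notin> E"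
  shows "\<exists>cs. is_cycle E cs"
proof -
  have "\<not> inj w"
    using assms(1,2) range_inj_infinite finite_subset by (metis image_subsetI)
  then have "\<exists>j. \<exists>i<j. w i = w j" by (metis linorder_injI)
  then obtain j where "\<exists>i<j. w i = w j" and first: "\<And>k. k < j \<Longrightarrow> \<not> (\<exists>i<k. w i = w k)"
    unfolding exists_least_iff[of "\<lambda>j. \<exists>i<j. w i = w j"] by blast
  then obtain i where ij: "i < j" "w i = w j" by blast
  have "inj_on w {i..<j}"
    by (rule linorder_inj_onI') (use first in fastforce)
  moreover have "j \<noteq> Suc i" "j \<noteq> Suc (Suc i)"
    using edge[of i] irrefl nonbacktracking[of i] ij by auto
  moreover have "(w (j - 1), w j) \<in> E"
    using edge[of "j - 1"] ij by simp
  ultimately have "is_cycle E (map w [i..<j])"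
    using ij edge by (auto simp: is_cycle_def distinct_map last_map hd_map)
  then show ?thesis by blast
qed

lemma acyclic_no_nonbacktracking_successor:
  assumes "finite S" and "x0 \<in> S" and irrefl: "\<And>v. (v, v) \<notin> E"
    and acyclic: "\<nexists>cs. is_cycle E cs"
    and succ: "\<And>x. x \<in> S \<Longrightarrow> nx x \<in> S \<and> (x, nx x) \<in> E"
    and nonbacktracking: "\<And>x. x \<in> S \<Longrightarrow> nx (nx x) \<noteq> x"
  shows False
proof -
  define w where "w k = (nx ^^ k) x0" for k
  have inS: "w k \<in> S" for k
    by (induction k) (use \<open>x0 \<in> S\<close> succ in \<open>auto simp: w_def\<close>)
  moreover have "(w k, w (Suc k)) \<in> E" "w (Suc (Suc k)) \<noteq> w k" for k
    using succ[OF inS[of k]] nonbacktracking[OF inS[of k]] by (simp_all add: w_def)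
  ultimately show False
    using nonbacktracking_walk_imp_cycle[OF assms(1), of w E] irrefl acyclic by blast
qed

lemma acyclic_has_leaf:
  assumes "finite S" and "S \<noteq> {}" and irrefl: "\<And>v. (v, v) \<notin> E"
    and acyclic: "\<nexists>cs. is_cycle E cs"
  shows "\<exists>x\<in>S. \<forall>a\<in>S. \<forall>b\<in>S. (x, a) \<in> E \<longrightarrow> (x, b) \<in> E \<longrightarrow> a = b"
proof (rule ccontr)
  assume "\<not> ?thesis"
  then have "\<forall>p x. \<exists>u. x \<in> S \<longrightarrow> u \<in> S \<and> (x, u) \<in> E \<and> u \<noteq> p" by blast
  then obtain nx where nx: "\<And>p x. x \<in> S \<Longrightarrow> nx p x \<in> S \<and> (x, nx p x) \<in> E \<and> nx p x \<noteq> p"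
    by metis
  obtain x0 where "x0 \<in> S" using assms(2) by blast
  \<comment> \<open>The state is the pair (previous vertex, current vertex), so the walk never turns back.\<close>
  define q where "q k = ((\<lambda>(p, x). (x, nx p x)) ^^ k) (x0, nx x0 x0)" for k
  define w where "w k = fst (q k)" for k
  have q_Suc: "q (Suc k) = (snd (q k), nx (fst (q k)) (snd (q k)))" for k
    by (simp add: q_def split_beta)
  have w_SS: "w (Suc (Suc k)) = nx (w k) (w (Suc k))" for k
    by (simp add: w_def q_Suc)
  have w_0: "w 0 = x0" and w_1: "w (Suc 0) = nx x0 x0"
    by (simp_all add: w_def q_def)
  have inS: "w k \<in> S \<and> w (Suc k) \<in> S" for k
    by (induction k) (use \<open>x0 \<in> S\<close> nx in \<open>auto simp: w_0 w_1 w_SS\<close>)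
  have edge: "(w k, w (Suc k)) \<in> E" for k
    by (cases k) (use \<open>x0 \<in> S\<close> nx inS in \<open>auto simp: w_0 w_1 w_SS\<close>)
  have "w (Suc (Suc k)) \<noteq> w k" for k
    using nx inS w_SS by metis
  with inS edge show False
    using nonbacktracking_walk_imp_cycle[OF assms(1), of w E] irrefl acyclic by blast
qed

lemma labeling_fun_upd:
  assumes "sym E"
    and "\<And>a b. (a, b) \<in> E \<Longrightarrow> a \<noteq> v \<Longrightarrow> b \<noteq> v \<Longrightarrow> \<bar>h a - h b\<bar> \<le> 1"
    and "\<And>b. (v, b) \<in> E \<Longrightarrow> b \<noteq> v \<Longrightarrow> \<bar>c - h b\<bar> \<le> 1"
  shows "labeling V E (h(v := c))"
  unfolding labeling_def
proof clarify
  fix a b assume ab: "(a, b) \<in> E"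
  then have "(b, a) \<in> E" using \<open>sym E\<close> by (auto dest: symD)
  then show "\<bar>(h(v := c)) a - (h(v := c)) b\<bar> \<le> 1"
    using assms(2,3) ab by (cases "a = v"; cases "b = v") (auto simp: abs_minus_commute)
qed

lemma acyclic_num3_lift:
  assumes "finite S" and "sym E" and irrefl: "\<And>v. (v, v) \<notin> E"
    and acyclic: "\<nexists>cs. is_cycle E cs"
  shows "\<exists>h. labeling S (E \<inter> S \<times> S) h \<and> (\<forall>u\<in>S. (of_int (h u) :: 3) = d u)"
  using assms(1)
proof (induction S rule: finite_remove_induct)
  case empty
  show ?case by (simp add: labeling_def)
next
  case (remove S)
  obtain x where "x \<in> S" and leaf: "\<And>a b. a \<in> S \<Longrightarrow> b \<in> S \<Longrightarrow> (x, a) \<in> E \<Longrightarrow> (x, b) \<in> E \<Longrightarrow> a = b"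
    using acyclic_has_leaf[OF remove.hyps(1,2) irrefl acyclic] by blast
  obtain h where lab: "labeling (S - {x}) (E \<inter> (S - {x}) \<times> (S - {x})) h"
    and lift: "\<forall>u\<in>S - {x}. (of_int (h u) :: 3) = d u"
    using remove.IH[OF \<open>x \<in> S\<close>] by blast
  obtain t where t: "\<And>y. y \<in> S \<Longrightarrow> (x, y) \<in> E \<Longrightarrow> t = h y"
    using leaf by (cases "\<exists>y\<in>S. (x, y) \<in> E") blast+
  obtain c where c: "\<bar>c - t\<bar> \<le> 1" "(of_int c :: 3) = d x"
    using num3_lift_near by blast
  have "labeling S (E \<inter> S \<times> S) (h(x := c))"
  proof (rule labeling_fun_upd)
    show "sym (E \<inter> S \<times> S)"
      using \<open>sym E\<close> by (auto simp: sym_def)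
  qed (use lab c t in \<open>auto simp: labeling_def\<close>)
  moreover have "\<forall>u\<in>S. (of_int ((h(x := c)) u) :: 3) = d u"
    using lift c by auto
  ultimately show ?case by blast
qed

lemma Dset_nonempty:
  assumes "simple_graph V E" and "\<nexists>cs. is_cycle E cs"
  shows "Dset V E f g \<noteq> {}"
proof -
  have "E \<inter> V \<times> V = E"
    using assms(1) by (auto simp: simple_graph_def)
  then obtain h where "labeling V E h" "\<forall>u\<in>V. (of_int (h u) :: 3) = g u - f u"
    using acyclic_num3_lift[of V E "\<lambda>u. g u - f u"] assms by (auto simp: simple_graph_def)
  then show ?thesis by (auto simp: Dset_def)
qed

lemma int_norm1: "int (norm1 V h) = (\<Sum>v\<in>V. \<bar>h v\<bar>)"
  by (simp add: norm1_def sum_nonneg)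

lemma norm1_fun_upd:
  assumes "finite V" and "v \<in> V"
  shows "int (norm1 V (h(v := c))) = int (norm1 V h) - \<bar>h v\<bar> + \<bar>c\<bar>"
proof -
  have "(\<Sum>u\<in>V - {v}. \<bar>(h(v := c)) u\<bar>) = (\<Sum>u\<in>V - {v}. \<bar>h u\<bar>)"
    by (rule sum.cong) auto
  then show ?thesis
    unfolding int_norm1 sum.remove[OF assms] by simp
qed

lemma Dset_diff:
  assumes "h \<in> Dset V E f g" and "u \<in> V" and "w \<in> V"
  shows "g u - g w = f u - f w + of_int (h u - h w)"
proof -
  have "(of_int (h u) :: 3) = g u - f u" "(of_int (h w) :: 3) = g w - f w"
    using assms by (auto simp: Dset_def)
  then show ?thesis by (simp add: algebra_simps)
qed

lemma col_adj_iff_recolor: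
  "col_adj V E f f' \<longleftrightarrow> proper3 V E f \<and> proper3 V E f' \<and>
     (\<exists>v\<in>V. \<exists>\<sigma>::int. (\<sigma> = 1 \<or> \<sigma> = -1) \<and> f' = f(v := f v + of_int \<sigma>))"
proof
  assume adj: "col_adj V E f f'"
  then obtain v where v: "{u\<in>V. f u \<noteq> f' u} = {v}"
    by (auto simp: col_adj_def card_1_singleton_iff)
  define \<sigma> :: int where "\<sigma> = (if f' v - f v = 1 then 1 else -1)"
  have "f' v = f v + of_int \<sigma>"
    using num3_cases[of "f' v - f v"] v by (auto simp: \<sigma>_def diff_eq_eq)
  moreover have "f' u = f u" if "u \<noteq> v" for u
    using v adj that by (cases "u \<in> V") (auto simp: col_adj_def proper3_def)
  ultimately have "f' = f(v := f v + of_int \<sigma>)" by auto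
  moreover have "v \<in> V" "\<sigma> = 1 \<or> \<sigma> = -1"
    using v by (auto simp: \<sigma>_def)
  ultimately show "proper3 V E f \<and> proper3 V E f' \<and>
     (\<exists>v\<in>V. \<exists>\<sigma>::int. (\<sigma> = 1 \<or> \<sigma> = -1) \<and> f' = f(v := f v + of_int \<sigma>))"
    using adj by (auto simp: col_adj_def)
next
  assume "proper3 V E f \<and> proper3 V E f' \<and>
     (\<exists>v\<in>V. \<exists>\<sigma>::int. (\<sigma> = 1 \<or> \<sigma> = -1) \<and> f' = f(v := f v + of_int \<sigma>))"
  then obtain v \<sigma> where "proper3 V E f" "proper3 V E f'" "v \<in> V" "\<sigma> = 1 \<or> \<sigma> = -1"
    and f': "f' = f(v := f v + of_int \<sigma>)" by blast
  moreover from this have "{u\<in>V. f u \<noteq> f' u} = {v}" by auto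
  ultimately show "col_adj V E f f'" by (simp add: col_adj_def)
qed

lemma proper3_fun_upd:
  assumes "proper3 V E f" and "v \<in> V" and "sym E" and "\<And>u. (v, u) \<in> E \<Longrightarrow> f u \<noteq> c"
  shows "proper3 V E (f(v := c))"
  unfolding proper3_def
proof (intro conjI allI impI ballI)
  fix e assume "e \<in> E"
  then obtain a b where e: "e = (a, b)" "(a, b) \<in> E" "(b, a) \<in> E"
    using \<open>sym E\<close> by (cases e) (auto dest: symD)
  then have "f a \<noteq> f b" "a \<noteq> b"
    using \<open>proper3 V E f\<close> by (auto simp: proper3_def)
  then show "case e of (a, b) \<Rightarrow> (f(v := c)) a \<noteq> (f(v := c)) b"
    using e assms(4) by auto
qed (use assms(1,2) in \<open>auto simp: proper3_def\<close>)

lemma Dset_recolor_back: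
  fixes \<sigma> :: int and f :: "'a \<Rightarrow> 3" and v :: 'a
  defines "f' \<equiv> f(v := f v + of_int \<sigma>)"
  assumes "sym E" and "E \<subseteq> V \<times> V" and "v \<in> V" and \<sigma>: "\<sigma> = 1 \<or> \<sigma> = -1"
    and "proper3 V E f" and "proper3 V E f'" and "proper3 V E g"
    and h: "h \<in> Dset V E f' g"
  shows "h(v := h v + \<sigma>) \<in> Dset V E f g"
proof -
  \<comment> \<open>A violating neighbour b forces \<open>f v - f b = \<sigma>\<close>, and then \<open>g v = g b\<close>.\<close>
  have near: "\<bar>h v + \<sigma> - h b\<bar> \<le> 1" if vb: "(v, b) \<in> E" "b \<noteq> v" for b
  proof (rule ccontr)
    assume "\<not> ?thesis"
    moreover have "\<bar>h v - h b\<bar> \<le> 1"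
      using h vb by (auto simp: Dset_def labeling_def)
    ultimately have "h v - h b = \<sigma>" using \<sigma> by auto
    moreover have "b \<in> V" using vb \<open>E \<subseteq> V \<times> V\<close> by auto
    ultimately have "g v - g b = f' v - f' b + of_int \<sigma>"
      using Dset_diff[OF h \<open>v \<in> V\<close>] by metis
    then have "g v - g b = f v - f b + of_int \<sigma> + of_int \<sigma>"
      using vb by (simp add: f'_def)
    moreover have "f v - f b \<noteq> 0" "f v - f b + of_int \<sigma> \<noteq> 0"
      using vb \<open>proper3 V E f\<close> \<open>proper3 V E f'\<close> by (auto simp: proper3_def f'_def diff_add_eq)
    moreover have "(of_int \<sigma> :: 3) \<noteq> 0"
      using \<sigma> by auto
    ultimately have "g v - g b = 0"
      using num3_add_add_eq_0 by metis
    then show False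
      using vb \<open>proper3 V E g\<close> by (auto simp: proper3_def)
  qed
  have "labeling V E (h(v := h v + \<sigma>))"
    by (rule labeling_fun_upd) (use h near \<open>sym E\<close> in \<open>auto simp: Dset_def labeling_def\<close>)
  moreover have "(of_int ((h(v := h v + \<sigma>)) u) :: 3) = g u - f u" if "u \<in> V" for u
    using h that by (auto simp: Dset_def f'_def algebra_simps)
  ultimately show ?thesis by (simp add: Dset_def)
qed

lemma Dset_edge_no_countermove:
  assumes "h \<in> Dset V E f g" and "proper3 V E g" and "(v, u) \<in> E" and "u \<in> V" and "v \<in> V"
    and "f u = f v + of_int \<sigma>"
  shows "h u \<noteq> h v - \<sigma>"
proof
  assume "h u = h v - \<sigma>"
  then have "g u - g v = 0"
    using Dset_diff[OF assms(1,4,5)] assms(6) by simp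
  then show False
    using assms(2,3) by (auto simp: proper3_def)
qed

lemma Dset_recolor_top:
  fixes \<sigma> :: int
  assumes "sym E" and h: "h \<in> Dset V E f g" and \<sigma>: "\<sigma> = 1 \<or> \<sigma> = -1"
    and top: "\<And>b. (v, b) \<in> E \<Longrightarrow> \<sigma> * h b \<le> \<sigma> * h v"
  shows "h(v := h v - \<sigma>) \<in> Dset V E (f(v := f v + of_int \<sigma>)) g"
proof -
  have near: "\<bar>h v - \<sigma> - h b\<bar> \<le> 1" if "(v, b) \<in> E" for b
  proof -
    have "\<bar>h v - h b\<bar> \<le> 1"
      using h that by (auto simp: Dset_def labeling_def)
    then show ?thesis
      using top[OF that] \<sigma> by (auto simp: abs_le_iff)
  qed
  have "labeling V E (h(v := h v - \<sigma>))"
    by (rule labeling_fun_upd) (use h near \<open>sym E\<close> in \<open>auto simp: Dset_def labeling_def\<close>)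
  moreover have "(of_int ((h(v := h v - \<sigma>)) u) :: 3) = g u - (f(v := f v + of_int \<sigma>)) u"
    if "u \<in> V" for u
    using h that by (auto simp: Dset_def algebra_simps)
  ultimately show ?thesis by (simp add: Dset_def)
qed

lemma exists_free_top_vertex:
  fixes \<sigma> :: int
  assumes "simple_graph V E" and acyclic: "\<nexists>cs. is_cycle E cs" and "proper3 V E g"
    and h: "h \<in> Dset V E f g" and \<sigma>: "\<sigma> = 1 \<or> \<sigma> = -1" and "V \<noteq> {}"
  shows "\<exists>v\<in>V. (\<forall>u\<in>V. \<sigma> * h u \<le> \<sigma> * h v) \<and> (\<forall>u. (v, u) \<in> E \<longrightarrow> f u \<noteq> f v + of_int \<sigma>)"
proof -
  have "finite V" and EV: "E \<subseteq> V \<times> V" and irrefl: "\<And>v. (v, v) \<notin> E"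
    using \<open>simple_graph V E\<close> by (auto simp: simple_graph_def)
  define M where "M = Max ((\<lambda>u. \<sigma> * h u) ` V)"
  define S where "S = {v\<in>V. \<sigma> * h v = M}"
  have le_M: "\<sigma> * h u \<le> M" if "u \<in> V" for u
    unfolding M_def using \<open>finite V\<close> that by (intro Max_ge) auto
  have "M \<in> (\<lambda>u. \<sigma> * h u) ` V"
    unfolding M_def using \<open>finite V\<close> \<open>V \<noteq> {}\<close> by (intro Max_in) auto
  then obtain x0 where "x0 \<in> S" by (auto simp: S_def)
  have climb_in_S: "u \<in> S" if "v \<in> S" "(v, u) \<in> E" "f u = f v + of_int \<sigma>" for u v
  proof -
    have "u \<in> V" "v \<in> V" "\<bar>h v - h u\<bar> \<le> 1"
      using that EV h by (auto simp: Dset_def labeling_def)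
    moreover have "h u \<noteq> h v - \<sigma>"
      using Dset_edge_no_countermove[OF h \<open>proper3 V E g\<close> that(2) \<open>u \<in> V\<close> \<open>v \<in> V\<close> that(3)] .
    ultimately show ?thesis
      using le_M[OF \<open>u \<in> V\<close>] that(1) \<sigma> by (auto simp: S_def)
  qed
  have "\<exists>v\<in>S. \<forall>u. (v, u) \<in> E \<longrightarrow> f u \<noteq> f v + of_int \<sigma>"
  proof (rule ccontr)
    assume "\<not> ?thesis"
    then obtain nx where nx: "\<And>v. v \<in> S \<Longrightarrow> (v, nx v) \<in> E \<and> f (nx v) = f v + of_int \<sigma>"
      by metis
    have succ: "nx v \<in> S \<and> (v, nx v) \<in> E" if "v \<in> S" for v
      using nx climb_in_S that by blast
    have "(of_int \<sigma> + of_int \<sigma> :: 3) \<noteq> 0"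
      using \<sigma> by auto
    moreover have "f (nx (nx v)) = f v + (of_int \<sigma> + of_int \<sigma>)" if "v \<in> S" for v
      using nx[OF that] nx[of "nx v"] succ[OF that] by (simp add: add.assoc)
    ultimately have "nx (nx v) \<noteq> v" if "v \<in> S" for v
      using that by fastforce
    moreover have "finite S"
      using \<open>finite V\<close> by (simp add: S_def)
    ultimately show False
      using acyclic_no_nonbacktracking_successor[OF _ \<open>x0 \<in> S\<close> irrefl acyclic succ] by blast
  qed
  then show ?thesis
    using le_M by (auto simp: S_def)
qed

lemma Dset_norm1_le_steps:
  assumes "simple_graph V E" and "proper3 V E g"
  shows "(col_adj V E ^^ n) f g \<Longrightarrow> \<exists>h\<in>Dset V E f g. norm1 V h \<le> n"
proof (induction n arbitrary: f)
  case 0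
  then show ?case
    by (intro bexI[of _ "\<lambda>_. 0"]) (auto simp: Dset_def labeling_def norm1_def)
next
  case (Suc n)
  then obtain f1 where adj: "col_adj V E f f1" and "(col_adj V E ^^ n) f1 g"
    by (metis relpowp_Suc_E2)
  then obtain h1 where h1: "h1 \<in> Dset V E f1 g" "norm1 V h1 \<le> n"
    using Suc.IH by blast
  from adj obtain v \<sigma> where "proper3 V E f" "proper3 V E f1" "v \<in> V" and \<sigma>: "\<sigma> = 1 \<or> \<sigma> = -1"
    and f1: "f1 = f(v := f v + of_int \<sigma>)"
    unfolding col_adj_iff_recolor by blast
  have "finite V" "sym E" "E \<subseteq> V \<times> V"
    using \<open>simple_graph V E\<close> by (auto simp: simple_graph_def)
  have "h1(v := h1 v + \<sigma>) \<in> Dset V E f g"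
    using Dset_recolor_back[OF \<open>sym E\<close> \<open>E \<subseteq> V \<times> V\<close> \<open>v \<in> V\<close> \<sigma> \<open>proper3 V E f\<close> _ \<open>proper3 V E g\<close>]
      \<open>proper3 V E f1\<close> h1(1) f1 by blast
  moreover have "int (norm1 V (h1(v := h1 v + \<sigma>))) \<le> int (norm1 V h1) + 1"
    using norm1_fun_upd[OF \<open>finite V\<close> \<open>v \<in> V\<close>, of h1 "h1 v + \<sigma>"] \<sigma> by auto
  then have "norm1 V (h1(v := h1 v + \<sigma>)) \<le> Suc n"
    using h1(2) by linarith
  ultimately show ?case by blast
qed

lemma Dset_norm1_eq_0_imp_eq:
  assumes "finite V" and "proper3 V E f" and "proper3 V E g"
    and "h \<in> Dset V E f g" and "norm1 V h = 0"
  shows "f = g"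
proof
  have "\<forall>v\<in>V. h v = 0"
    using int_norm1[of V h] assms(1,5) by (simp add: sum_nonneg_eq_0_iff)
  then show "f x = g x" for x
    using assms(2-4) by (cases "x \<in> V") (auto simp: Dset_def proper3_def)
qed

lemma exists_norm1_decreasing_recolor:
  assumes "simple_graph V E" and acyclic: "\<nexists>cs. is_cycle E cs"
    and "proper3 V E f" and "proper3 V E g" and h: "h \<in> Dset V E f g" and "norm1 V h \<noteq> 0"
  shows "\<exists>f' h'. col_adj V E f f' \<and> h' \<in> Dset V E f' g \<and> norm1 V h' + 1 = norm1 V h"
proof -
  have "finite V" "sym E" "E \<subseteq> V \<times> V"
    using \<open>simple_graph V E\<close> by (auto simp: simple_graph_def)
  have "(\<Sum>v\<in>V. \<bar>h v\<bar>) \<noteq> 0"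
    using int_norm1[of V h] \<open>norm1 V h \<noteq> 0\<close> by simp
  then obtain v0 where "v0 \<in> V" "h v0 \<noteq> 0"
    by (metis (no_types, lifting) abs_0 sum.neutral)
  define \<sigma> where "\<sigma> = sgn (h v0)"
  have \<sigma>: "\<sigma> = 1 \<or> \<sigma> = -1"
    using \<open>h v0 \<noteq> 0\<close> by (auto simp: \<sigma>_def sgn_if)
  obtain v where "v \<in> V" and top: "\<forall>u\<in>V. \<sigma> * h u \<le> \<sigma> * h v"
    and free: "\<forall>u. (v, u) \<in> E \<longrightarrow> f u \<noteq> f v + of_int \<sigma>"
    using exists_free_top_vertex[OF \<open>simple_graph V E\<close> acyclic \<open>proper3 V E g\<close> h \<sigma>]
      \<open>v0 \<in> V\<close> by blast
  define f' where "f' = f(v := f v + of_int \<sigma>)"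
  define h' where "h' = h(v := h v - \<sigma>)"
  have "proper3 V E f'"
    unfolding f'_def by (rule proper3_fun_upd) (use assms(3) \<open>v \<in> V\<close> \<open>sym E\<close> free in auto)
  then have "col_adj V E f f'"
    unfolding col_adj_iff_recolor f'_def using assms(3) \<open>v \<in> V\<close> \<sigma> by blast
  moreover have "h' \<in> Dset V E f' g"
    unfolding h'_def f'_def
    by (rule Dset_recolor_top[OF \<open>sym E\<close> h \<sigma>]) (use top \<open>E \<subseteq> V \<times> V\<close> in blast)
  moreover have "\<sigma> * h v0 > 0"
    using \<open>h v0 \<noteq> 0\<close> by (auto simp: \<sigma>_def sgn_if)
  then have "\<sigma> * h v > 0"
    using top \<open>v0 \<in> V\<close> by force
  then have "int (norm1 V h') = int (norm1 V h) - 1"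
    using norm1_fun_upd[OF \<open>finite V\<close> \<open>v \<in> V\<close>, of h "h v - \<sigma>"] \<sigma> by (auto simp: h'_def)
  then have "norm1 V h' + 1 = norm1 V h"
    by linarith
  ultimately show ?thesis by blast
qed

lemma steps_le_Dset_norm1:
  assumes "simple_graph V E" and "\<nexists>cs. is_cycle E cs" and "proper3 V E g"
  shows "proper3 V E f \<Longrightarrow> h \<in> Dset V E f g \<Longrightarrow> (col_adj V E ^^ norm1 V h) f g"
proof (induction "norm1 V h" arbitrary: f h)
  case 0
  have "finite V"
    using \<open>simple_graph V E\<close> by (simp add: simple_graph_def)
  then have "f = g"
    using Dset_norm1_eq_0_imp_eq 0 \<open>proper3 V E g\<close> by metis
  then show ?case
    using 0 by simp
next
  case (Suc n)
  then obtain f' h' where adj: "col_adj V E f f'" and h': "h' \<in> Dset V E f' g"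
    and "norm1 V h' + 1 = norm1 V h"
    using exists_norm1_decreasing_recolor[OF assms(1,2) _ assms(3)] by (metis nat.simps(3))
  then have "norm1 V h' = n"
    using Suc.hyps(2) by simp
  moreover have "proper3 V E f'"
    using adj by (simp add: col_adj_def)
  ultimately have "(col_adj V E ^^ n) f' g"
    using Suc.hyps(1) h' by blast
  then show ?case
    using adj Suc.hyps(2) by (metis relpowp_Suc_I2)
qed

theorem mainTheorem6:
  fixes V :: "'a set" and E :: "('a \<times> 'a) set" and f g :: "'a \<Rightarrow> 3"
  assumes "is_tree V E" and "proper3 V E f" and "proper3 V E g"
  shows "col_dist V E f g = enat (INF h \<in> Dset V E f g. norm1 V h)"
proof -
  have forest: "simple_graph V E" "\<nexists>cs. is_cycle E cs"
    using assms(1) by (auto simp: is_tree_def)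
  define m where "m = (INF h \<in> Dset V E f g. norm1 V h)"
  have "m \<in> norm1 V ` Dset V E f g"
    unfolding m_def by (rule Inf_nat_def1) (use Dset_nonempty[OF forest] in blast)
  then obtain hm where hm: "hm \<in> Dset V E f g" "norm1 V hm = m"
    by blast
  have "(col_adj V E ^^ m) f g"
    using steps_le_Dset_norm1[OF forest assms(3,2) hm(1)] hm(2) by simp
  then have "col_dist V E f g \<le> enat m"
    unfolding col_dist_def by (intro INF_lower2[of m]) auto
  moreover have "enat m \<le> col_dist V E f g"
    unfolding col_dist_def
  proof (rule INF_greatest)
    fix n assume "n \<in> {n. (col_adj V E ^^ n) f g}"
    then obtain h where h: "h \<in> Dset V E f g" "norm1 V h \<le> n"
      using Dset_norm1_le_steps[OF forest(1) assms(3)] by blast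
    have "m \<le> norm1 V h"
      unfolding m_def using h(1) by (intro cINF_lower) auto
    then show "enat m \<le> enat n"
      using h(2) by simp
  qed
  ultimately show ?thesis by (simp add: m_def)
qed

end
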